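(* Let $n\ge 2$ and let $P_n$ be the path on $n$ vertices. Then $$\tau(P_n)=\begin{cases}1 & \text{if } n\equiv 0 \pmod 4,\\ \lfloor n/4\rfloor & \text{if } n\equiv 1 \pmod 4,\\ (\lfloor n/4\rfloor+1)^2 & \text{if } n\equiv 2 \pmod 4,\\ \lfloor n/4\rfloor+2 & \text{if } n\equiv 3 \pmod 4.\end{cases}$$
   Context: A set $D \subseteq V(G)$ is a total dominating set of a graph $G$ if every vertex of $G$ has a neighbor in $D$. $\gamma_t(G)$ is the minimum cardinality of a total dominating set; a minimum one is a $\gamma_t(G)$-set, and $\tau(G)$ is the number of $\gamma_t(G)$-sets. *)

theory Defs
  imports Main
begin

definition total_dominating_set :: "'a set \<Rightarrow> ('a \<Rightarrow> 'a \<Rightarrow> bool) \<Rightarrow> 'a set \<Rightarrow> bool" where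
  "total_dominating_set V E D \<longleftrightarrow> D \<subseteq> V \<and> (\<forall>v\<in>V. \<exists>u\<in>D. E v u)"

definition gamma_t :: "'a set \<Rightarrow> ('a \<Rightarrow> 'a \<Rightarrow> bool) \<Rightarrow> nat" where
  "gamma_t V E = (LEAST k. \<exists>D. total_dominating_set V E D \<and> card D = k)"

definition tau :: "'a set \<Rightarrow> ('a \<Rightarrow> 'a \<Rightarrow> bool) \<Rightarrow> nat" where
  "tau V E = card {D. total_dominating_set V E D \<and> card D = gamma_t V E}"

definition path_vertices :: "nat \<Rightarrow> nat set" where
  "path_vertices n = {1..n}"

definition path_adj :: "nat \<Rightarrow> nat \<Rightarrow> bool" where
  "path_adj i j \<longleftrightarrow> i + 1 = j \<or> j + 1 = i"

end

theory Submission
  imports Defs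
begin

text \<open>A total dominating set of the path 1, ..., n is built from left to right. After the
  first n vertices only two bits matter: whether n - 1 and n belong to D. For each of the four
  states we track the lowest term (m, c) of the counting sequence k \<mapsto> #sets of size k:
  leaving n + 1 out forces n - 1 \<in> D, while putting n + 1 in shifts the size by one and adds two
  states. Starting from n = 1, these transitions reproduce a table that is periodic in n with
  period 4, with sizes growing by 2 and counts polynomial in n div 4. Finally D totally dominates
  the whole path iff n - 1 \<in> D, so gamma_t and tau are read off the two states with n - 1 \<in> D.\<close>

text \<open>With c = 0 this only says that f vanishes on {0..m}.\<close>

definition lowest_term :: "(nat \<Rightarrow> nat) \<Rightarrow> nat \<times> nat \<Rightarrow> bool" where
  "lowest_term f mc \<longleftrightarrow> (\<forall>k < fst mc. f k = 0) \<and> f (fst mc) = snd mc"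

lemma lowest_term_iff [simp]: "lowest_term f (m, c) \<longleftrightarrow> (\<forall>k < m. f k = 0) \<and> f m = c"
  by (simp add: lowest_term_def)

fun lowest_add :: "nat \<times> nat \<Rightarrow> nat \<times> nat \<Rightarrow> nat \<times> nat" where
  "lowest_add (m1, c1) (m2, c2) =
     (min m1 m2, (if m1 \<le> m2 then c1 else 0) + (if m2 \<le> m1 then c2 else 0))"

lemma lowest_term_add:
  assumes "lowest_term f p" and "lowest_term g q"
  shows "lowest_term (\<lambda>k. f k + g k) (lowest_add p q)"
  using assms by (cases p; cases q) (auto simp: min_def)

lemma lowest_term_Suc:
  assumes "f 0 = 0" and "lowest_term (\<lambda>k. f (Suc k)) p"
  shows "lowest_term f (apfst Suc p)"
  using assms by (cases p) (auto simp: less_Suc_eq_0_disj)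

text \<open>Vertices 1, ..., n - 1 are totally dominated; a and b record whether n - 1 and n lie
  in D. Vertex 0 never lies in D, so for i = 1 and for n = 1 the subtraction is harmless.\<close>

definition dom_prefix :: "nat \<Rightarrow> bool \<Rightarrow> bool \<Rightarrow> nat \<Rightarrow> nat set set" where
  "dom_prefix n a b k = {D. D \<subseteq> {1..n} \<and> card D = k
     \<and> (\<forall>i\<in>{1..<n}. i - 1 \<in> D \<or> i + 1 \<in> D) \<and> (n - 1 \<in> D \<longleftrightarrow> a) \<and> (n \<in> D \<longleftrightarrow> b)}"

lemma finite_dom_prefix: "finite (dom_prefix n a b k)"
  by (rule finite_subset[of _ "Pow {1..n}"]) (auto simp: dom_prefix_def)

lemma dom_prefix_Suc_out:
  assumes "n \<ge> 1"
  shows "dom_prefix (Suc n) b False k = dom_prefix n True b k"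
proof -
  have "n - 1 \<in> D" if "\<forall>i\<in>{1..<Suc n}. i - 1 \<in> D \<or> i + 1 \<in> D" "Suc n \<notin> D" for D :: "nat set"
    using that(1)[rule_format, of n] that(2) assms by auto
  with assms show ?thesis
    unfolding dom_prefix_def by (auto simp: subset_iff less_Suc_eq le_Suc_eq)
qed

lemma dom_prefix_Suc_in:
  assumes "n \<ge> 1"
  shows "dom_prefix (Suc n) b True (Suc k)
    = insert (Suc n) ` (dom_prefix n True b k \<union> dom_prefix n False b k)"
proof (rule set_eqI, rule iffI)
  fix D assume D: "D \<in> dom_prefix (Suc n) b True (Suc k)"
  then have "finite D" unfolding dom_prefix_def by (auto intro: finite_subset)
  with D have "D - {Suc n} \<in> dom_prefix n True b k \<union> dom_prefix n False b k"
    unfolding dom_prefix_def by (auto simp: subset_iff le_Suc_eq)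
  moreover have "D = insert (Suc n) (D - {Suc n})" using D unfolding dom_prefix_def by auto
  ultimately show "D \<in> insert (Suc n) ` (dom_prefix n True b k \<union> dom_prefix n False b k)" by blast
next
  fix D assume "D \<in> insert (Suc n) ` (dom_prefix n True b k \<union> dom_prefix n False b k)"
  then obtain E where E: "E \<in> dom_prefix n True b k \<union> dom_prefix n False b k"
    and D: "D = insert (Suc n) E"
    by auto
  then have "finite E" "Suc n \<notin> E" unfolding dom_prefix_def by (auto intro: finite_subset)
  with E D assms show "D \<in> dom_prefix (Suc n) b True (Suc k)"
    unfolding dom_prefix_def by (auto simp: less_Suc_eq)
qed

lemma card_dom_prefix_Suc_in:
  assumes "n \<ge> 1"
  shows "card (dom_prefix (Suc n) b True (Suc k))
    = card (dom_prefix n True b k) + card (dom_prefix n False b k)"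
proof -
  have "inj_on (insert (Suc n)) (dom_prefix n True b k \<union> dom_prefix n False b k)" (is "inj_on _ ?P")
  proof (rule inj_onI)
    fix X Y assume "X \<in> ?P" "Y \<in> ?P" "insert (Suc n) X = insert (Suc n) Y"
    moreover from \<open>X \<in> ?P\<close> \<open>Y \<in> ?P\<close> have "Suc n \<notin> X" "Suc n \<notin> Y"
      by (auto simp: dom_prefix_def)
    ultimately show "X = Y" by (simp add: insert_ident)
  qed
  moreover have "dom_prefix n True b k \<inter> dom_prefix n False b k = {}"
    by (auto simp: dom_prefix_def)
  ultimately show ?thesis
    using assms by (simp add: dom_prefix_Suc_in card_image card_Un_disjoint finite_dom_prefix)
qed

lemma dom_prefix_Suc_in_0: "dom_prefix (Suc n) b True 0 = {}"
  by (auto simp: dom_prefix_def card_eq_0_iff dest: finite_subset)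

definition counts_profile :: "nat \<Rightarrow> nat \<times> nat \<Rightarrow> nat \<times> nat \<Rightarrow> nat \<times> nat \<Rightarrow> nat \<times> nat \<Rightarrow> bool" where
  "counts_profile n ff ft tf tt \<longleftrightarrow>
     lowest_term (\<lambda>k. card (dom_prefix n False False k)) ff \<and>
     lowest_term (\<lambda>k. card (dom_prefix n False True k)) ft \<and>
     lowest_term (\<lambda>k. card (dom_prefix n True False k)) tf \<and>
     lowest_term (\<lambda>k. card (dom_prefix n True True k)) tt"

lemma lowest_term_dom_prefix_Suc_in:
  assumes "n \<ge> 1"
    and "lowest_term (\<lambda>k. card (dom_prefix n True b k)) p"
    and "lowest_term (\<lambda>k. card (dom_prefix n False b k)) q"
  shows "lowest_term (\<lambda>k. card (dom_prefix (Suc n) b True k)) (apfst Suc (lowest_add p q))"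
  by (rule lowest_term_Suc)
    (use assms lowest_term_add in \<open>simp_all add: dom_prefix_Suc_in_0 card_dom_prefix_Suc_in\<close>)

lemma counts_profile_Suc:
  assumes "n \<ge> 1" and "counts_profile n ff ft tf tt"
  shows "counts_profile (Suc n) tf (apfst Suc (lowest_add tf ff)) tt (apfst Suc (lowest_add tt ft))"
  using assms lowest_term_dom_prefix_Suc_in[OF assms(1)]
  by (simp add: counts_profile_def dom_prefix_Suc_out)

lemma counts_profile_1: "counts_profile 1 (0, 1) (1, 1) (1, 0) (2, 0)"
proof -
  have "dom_prefix 1 True b k = {}" for b k
    by (auto simp: dom_prefix_def)
  moreover have "dom_prefix 1 False False k = (if k = 0 then {{}} else {})" for k
    by (auto simp: dom_prefix_def subset_singleton_iff)
  moreover have "dom_prefix 1 False True k = (if k = 1 then {{1}} else {})" for k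
    by (auto simp: dom_prefix_def card_Suc_eq subset_singleton_iff)
  ultimately show ?thesis
    by (simp add: counts_profile_def)
qed

lemma counts_profile_4q1_4q2:
  assumes "counts_profile (4*q+1) (2*q, 1) (2*q+1, q+1) (2*q+1, q) (2*q+2, q*(q+1))"
  shows "counts_profile (4*q+2) (2*q+1, q) (2*q+1, 1) (2*q+2, q*(q+1)) (2*q+2, q+1)"
  using counts_profile_Suc[OF _ assms] by (simp add: eval_nat_numeral)

lemma counts_profile_4q2_4q3:
  assumes "counts_profile (4*q+2) (2*q+1, q) (2*q+1, 1) (2*q+2, q*(q+1)) (2*q+2, q+1)"
  shows "counts_profile (4*q+3) (2*q+2, q*(q+1)) (2*q+2, q) (2*q+2, q+1) (2*q+2, 1)"
  using counts_profile_Suc[OF _ assms] by (simp add: eval_nat_numeral)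

lemma counts_profile_4q3_4q4:
  assumes "counts_profile (4*q+3) (2*q+2, q*(q+1)) (2*q+2, q) (2*q+2, q+1) (2*q+2, 1)"
  shows "counts_profile (4*q+4) (2*q+2, q+1) (2*q+3, (q+1)^2) (2*q+2, 1) (2*q+3, q+1)"
  using counts_profile_Suc[OF _ assms] by (simp add: eval_nat_numeral)

lemma counts_profile_4q4_4q5:
  assumes "counts_profile (4*q+4) (2*q+2, q+1) (2*q+3, (q+1)^2) (2*q+2, 1) (2*q+3, q+1)"
  shows "counts_profile (4*(q+1)+1)
    (2*(q+1), 1) (2*(q+1)+1, q+2) (2*(q+1)+1, q+1) (2*(q+1)+2, (q+1)*(q+2))"
  using counts_profile_Suc[OF _ assms] by (simp add: eval_nat_numeral algebra_simps)

lemma counts_profile_4q1: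
  "counts_profile (4*q+1) (2*q, 1) (2*q+1, q+1) (2*q+1, q) (2*q+2, q*(q+1))"
proof (induction q)
  case 0
  then show ?case using counts_profile_1 by (simp add: eval_nat_numeral)
next
  case (Suc q)
  then show ?case
    using counts_profile_4q1_4q2 counts_profile_4q2_4q3 counts_profile_4q3_4q4 counts_profile_4q4_4q5
    by simp
qed

lemma gamma_t_tau_eq_lowest_term:
  assumes "finite V"
    and "lowest_term (\<lambda>k. card {D. total_dominating_set V E D \<and> card D = k}) (m, c)"
    and "c > 0"
  shows "gamma_t V E = m" and "tau V E = c"
proof -
  have fin: "finite {D. total_dominating_set V E D \<and> card D = k}" for k
    by (rule finite_subset[of _ "Pow V"]) (auto simp: total_dominating_set_def assms(1))
  have none_below: "\<not> (\<exists>D. total_dominating_set V E D \<and> card D = k)" if "k < m" for k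
  proof -
    have "card {D. total_dominating_set V E D \<and> card D = k} = 0"
      using assms(2) that by simp
    with fin[of k] show ?thesis by simp
  qed
  have "{D. total_dominating_set V E D \<and> card D = m} \<noteq> {}"
    using assms(2,3) by (metis card.empty lowest_term_iff less_irrefl)
  then have "\<exists>D. total_dominating_set V E D \<and> card D = m" by blast
  then show "gamma_t V E = m"
    unfolding gamma_t_def by (rule Least_equality) (use none_below not_le in blast)
  then show "tau V E = c"
    using assms(2) by (simp add: tau_def)
qed

lemma total_dominating_set_path_iff:
  assumes "n \<ge> 2"
  shows "total_dominating_set (path_vertices n) path_adj D \<and> card D = k
     \<longleftrightarrow> D \<in> dom_prefix n True False k \<union> dom_prefix n True True k"
proof -
  have "total_dominating_set (path_vertices n) path_adj D
     \<longleftrightarrow> D \<subseteq> {1..n} \<and> (\<forall>i\<in>{1..<n}. i - 1 \<in> D \<or> i + 1 \<in> D) \<and> n - 1 \<in> D"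
  proof
    assume "total_dominating_set (path_vertices n) path_adj D"
    then have sub: "D \<subseteq> {1..n}" and dom: "\<forall>v\<in>{1..n}. \<exists>u\<in>D. v + 1 = u \<or> u + 1 = v"
      by (auto simp: total_dominating_set_def path_vertices_def path_adj_def)
    have "i - 1 \<in> D \<or> i + 1 \<in> D" if "i \<in> {1..<n}" for i
      using dom that by fastforce
    moreover have "n - 1 \<in> D"
      using dom sub assms by fastforce
    ultimately show "D \<subseteq> {1..n} \<and> (\<forall>i\<in>{1..<n}. i - 1 \<in> D \<or> i + 1 \<in> D) \<and> n - 1 \<in> D"
      using sub by blast
  next
    assume D: "D \<subseteq> {1..n} \<and> (\<forall>i\<in>{1..<n}. i - 1 \<in> D \<or> i + 1 \<in> D) \<and> n - 1 \<in> D"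
    have "\<exists>u\<in>D. path_adj v u" if "v \<in> {1..n}" for v
    proof (cases "v = n")
      case True
      then show ?thesis using D assms by (intro bexI[of _ "n - 1"]) (auto simp: path_adj_def)
    next
      case False
      with D that have "v - 1 \<in> D \<or> v + 1 \<in> D" by auto
      with that show ?thesis
        by (auto simp: path_adj_def intro: bexI[of _ "v - 1"] bexI[of _ "v + 1"])
    qed
    with D show "total_dominating_set (path_vertices n) path_adj D"
      by (auto simp: total_dominating_set_def path_vertices_def)
  qed
  then show ?thesis
    by (auto simp: dom_prefix_def)
qed

lemma tau_path_eq_lowest_add:
  assumes "n \<ge> 2" and "counts_profile n ff ft tf tt" and "snd (lowest_add tf tt) > 0"
  shows "tau (path_vertices n) path_adj = snd (lowest_add tf tt)"
proof -
  have "card {D. total_dominating_set (path_vertices n) path_adj D \<and> card D = k}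
      = card (dom_prefix n True False k) + card (dom_prefix n True True k)" for k
    unfolding total_dominating_set_path_iff[OF assms(1)] Collect_mem_eq
    by (rule card_Un_disjoint) (auto simp: finite_dom_prefix dom_prefix_def)
  then have "lowest_term
      (\<lambda>k. card {D. total_dominating_set (path_vertices n) path_adj D \<and> card D = k})
      (lowest_add tf tt)"
    using assms(2) lowest_term_add by (simp add: counts_profile_def)
  then show ?thesis
    using gamma_t_tau_eq_lowest_term(2)[of "path_vertices n"] assms(3)
    by (metis finite_atLeastAtMost path_vertices_def prod.collapse)
qed

lemma nat_ge_2_mod_4_cases:
  fixes n :: nat
  assumes "n \<ge> 2"
  obtains (mod0) q where "n = 4*q + 4" | (mod1) q where "n = 4*q + 1" "q \<ge> 1"
    | (mod2) q where "n = 4*q + 2" | (mod3) q where "n = 4*q + 3"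
proof -
  have "n mod 4 < 4" by simp
  then consider "n mod 4 = 0" | "n mod 4 = 1" | "n mod 4 = 2" | "n mod 4 = 3" by linarith
  then show ?thesis
  proof cases
    case 1
    then show ?thesis
      using assms div_mult_mod_eq[of n 4] by (intro that(1)[of "n div 4 - 1"]) linarith
  next
    case 2
    then show ?thesis using assms div_mult_mod_eq[of n 4] by (intro that(2)[of "n div 4"]) linarith+
  next
    case 3
    then show ?thesis using div_mult_mod_eq[of n 4] by (intro that(3)[of "n div 4"]) linarith
  next
    case 4
    then show ?thesis using div_mult_mod_eq[of n 4] by (intro that(4)[of "n div 4"]) linarith
  qed
qed

theorem theorem5p1:
  fixes n :: nat
  assumes "n \<ge> 2"
  shows "tau (path_vertices n) path_adj =
    (if n mod 4 = 0 then 1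
     else if n mod 4 = 1 then n div 4
     else if n mod 4 = 2 then (n div 4 + 1)^2
     else n div 4 + 2)"
  using assms
proof (cases rule: nat_ge_2_mod_4_cases)
  case (mod0 q)
  then show ?thesis
    using tau_path_eq_lowest_add[OF assms] counts_profile_4q3_4q4[OF counts_profile_4q2_4q3[OF
        counts_profile_4q1_4q2[OF counts_profile_4q1[of q]]]] by simp
next
  case (mod1 q)
  then show ?thesis
    using tau_path_eq_lowest_add[OF assms] counts_profile_4q1[of q] by simp
next
  case (mod2 q)
  then have "n mod 4 = 2" "n div 4 = q" by presburger+
  then show ?thesis
    using \<open>n = 4*q + 2\<close> tau_path_eq_lowest_add[OF assms]
      counts_profile_4q1_4q2[OF counts_profile_4q1[of q]]
    by (simp add: power2_eq_square)
next
  case (mod3 q)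
  then have "n mod 4 = 3" "n div 4 = q" by presburger+
  then show ?thesis
    using \<open>n = 4*q + 3\<close> tau_path_eq_lowest_add[OF assms]
      counts_profile_4q2_4q3[OF counts_profile_4q1_4q2[OF counts_profile_4q1[of q]]] by simp
qed

end
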